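(* Let $\underline{\mathbb{G}}=(\mathbb{G},\mathcal{V},\omega_{\mathcal{V}},\mathcal{F},\omega_{\mathcal{F}})$ be a packaged ribbon graph and $\Gamma$ a finite group whose irreducible representations have dimensions $n_1,\dots,n_k$. Then: (1) when $x=1$, $y=-|\Gamma|$, $x_g=1$ and $y_g=-\frac{1}{|\Gamma|}\sum_{i=1}^k n_i^{2-2g}$ for all indices $g$, we have $q_\Gamma(\underline{\mathbb{G}}_\mathcal{V})=(-1)^{e(\mathbb{G})-|\mathcal{V}|}\boldsymbol{T}(\underline{\mathbb{G}};\boldsymbol{x},\boldsymbol{y})$; (2) when $x=-|\Gamma|$, $y=1$, $x_g=-\frac{1}{|\Gamma|}\sum_{i=1}^k n_i^{2-2g}$ and $y_g=1$ for all indices $g$, we have $p_\Gamma(\underline{\mathbb{G}}_\mathcal{F})=(-1)^{e(\mathbb{G})-|\mathcal{F}|}\boldsymbol{T}(\underline{\mathbb{G}};\boldsymbol{x},\boldsymbol{y})$.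
   Context: All ribbon graphs are orientable. A ribbon graph $\mathbb{G}=(V,E)$ is an orientable surface with boundary formed as a union of discs $V$ (vertices) and discs $E$ (edges) meeting in disjoint arcs, each arc on the boundary of exactly one vertex and one edge, each edge containing two arcs. For ribbon graphs $v,e,f,k$ count vertices, edges, boundary components, components; for graphs $v,e,k$ likewise and nullity $n=e-v+k$. $\mathbb{G}|A$ is the spanning ribbon subgraph on $A\subseteq E$, $A^c=E\setminus A$; $\mathbb{G}/A$ contracts the edges of $A$ (contracting $e$ with ends $u,v$: attach discs to the boundary curves of $e\cup u\cup v$ as new vertices, remove $e,u,v$), boundary components correspond naturally. The dual $\mathbb{G}^*$ has as vertices discs capping the boundary components of $\mathbb{G}$, same edges; vertices of $\mathbb{G}^*$ are identified with boundary components of $\mathbb{G}$. A packaged ribbon graph $\underline{\mathbb{G}}=(\mathbb{G},\mathcal{V},\omega_{\mathcal{V}},\mathcal{F},\omega_{\mathcal{F}})$: $\mathcal{V}$ a partition of the vertices, $\mathcal{F}$ a partition of the boundary components (equivalently of the vertices of $\mathbb{G}^*$), $\omega_{\mathcal{V}}:\mathcal{V}\to\mathbb{N}_0$, $\omega_{\mathcal{F}}:\mathcal{F}\to\mathbb{N}_0$; $\omega(\cdot)$ of a set of blocks is the total weight, $\omega_{\mathcal{V}}(\mathbb{G})$, $\omega_{\mathcal{F}}(\mathbb{G})$ the totals. $\underline{\mathbb{G}}_\mathcal{V}=(\mathbb{G},\mathcal{V},\omega_{\mathcal{V}})$, $\underline{\mathbb{G}}_\mathcal{F}=(\mathbb{G},\mathcal{F},\omega_{\mathcal{F}})$.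 Packaging: for a ribbon graph $\mathbb{H}$ with vertex partition $\mathcal{P}$, $G(\mathbb{H};\mathcal{P})$ has vertex set $\mathcal{P}$ and an edge $([u],[v])$ for each edge $(u,v)$ of $\mathbb{H}$. For a subgraph $K$, $\mathbb{H}[K]$ is the ribbon subgraph with all vertices in blocks that are vertices of $K$ and edges corresponding to those of $K$; $f(\mathbb{H}[K])$ its number of boundary components. Packaged surface Tutte polynomial, $\boldsymbol{x}=(x,x_0,x_{1/2},x_1,\dots)$, $\boldsymbol{y}=(y,y_0,y_{1/2},y_1,\dots)$: \[\boldsymbol{T}(\underline{\mathbb{G}};\boldsymbol{x},\boldsymbol{y})= \sum_{A\subseteq E} x^{n(G(\mathbb{G}^*|A^c;\mathcal{F}))}y^{n(G(\mathbb{G}|A;\mathcal{V}))}\prod_{H \text{ cpt. of } G(\mathbb{G}^*|A^c;\mathcal{F})}x_{g(\mathbb{G}^*,H)}\prod_{K \text{ cpt. of } G(\mathbb{G}|A;\mathcal{V})}y_{g(\mathbb{G},K)},\] with $g(\mathbb{G},K)=\tfrac12(2k(K)+e(K)-v(K)+\omega_{\mathcal{V}}(K)-f(\mathbb{G}[K]))$ and $g(\mathbb{G}^*,H)=\tfrac12(2k(H)+e(H)-v(H)+\omega_{\mathcal{F}}(H)-f(\mathbb{G}^*[H]))$. Flow/tension counts: for a subgraph $K$ of $G(\mathbb{G};\mathcal{V})$, $\underline{\mathbb{G}}_\mathcal{V}[K]=(\mathbb{G}[K],\mathcal{V}',\omega'_{\mathcal{V}})$ with restricted partition/weights; for a subgraph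 $H$ of $G(\mathbb{G}^*;\mathcal{F})$, $\underline{\mathbb{G}}_\mathcal{F}[H]=((\mathbb{G}^*[H])^*,\mathcal{F}',\omega'_{\mathcal{F}})$ with restricted partition/weights. If $G(\mathbb{G};\mathcal{V})$ is connected, $q^1_\Gamma(\underline{\mathbb{G}}_\mathcal{V})=|\Gamma|^{e(\mathbb{G})-|\mathcal{V}|}\sum_i n_i^{f(\mathbb{G})-e(\mathbb{G})+|\mathcal{V}|-\omega_{\mathcal{V}}(\mathbb{G})}$, otherwise the product of $q^1_\Gamma(\underline{\mathbb{G}}_\mathcal{V}[K])$ over components $K$; $q_\Gamma(\underline{\mathbb{G}}_\mathcal{V})=\sum_{A\subseteq E}(-1)^{|A^c|}q^1_\Gamma((\mathbb{G}|A,\mathcal{V},\omega_{\mathcal{V}}))$. If $G(\mathbb{G}^*;\mathcal{F})$ is connected, $p^1_\Gamma(\underline{\mathbb{G}}_\mathcal{F})=|\Gamma|^{e(\mathbb{G})-|\mathcal{F}|}\sum_i n_i^{v(\mathbb{G})-e(\mathbb{G})+|\mathcal{F}|-\omega_{\mathcal{F}}(\mathbb{G})}$, otherwise the product of $p^1_\Gamma(\underline{\mathbb{G}}_\mathcal{F}[H])$ over components $H$; $p_\Gamma(\underline{\mathbb{G}}_\mathcal{F})=\sum_{A\subseteq E}(-1)^{|A^c|}p^1_\Gamma((\mathbb{G}/A^c,\mathcal{F},\omega_{\mathcal{F}}))$. *)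

theory Defs
  imports Complex_Main "Jordan_Normal_Form.Matrix" "HOL-Algebra.Group" "HOL-Library.Disjoint_Sets"
begin

text \<open>An (orientable) ribbon graph is encoded combinatorially: a finite set of vertices,
a finite set of darts (half-edges), the vertex at which each dart sits, a rotation
permutation (cyclic order of darts around each vertex, one cycle per non-isolated vertex)
and a fixed-point-free involution pairing the two darts of each edge.
Vertices without darts are isolated vertices (discs without edges).\<close>

record ('v, 'd) rgraph =
  verts :: "'v set"
  darts :: "'d set"
  vx    :: "'d \<Rightarrow> 'v"
  rot   :: "'d \<Rightarrow> 'd"
  opp   :: "'d \<Rightarrow> 'd"

definition wf_rgraph :: "('v, 'd) rgraph \<Rightarrow> bool" where
  "wf_rgraph G \<longleftrightarrow>
     finite (verts G) \<and> finite (darts G) \<and>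
     (\<forall>d\<in>darts G. vx G d \<in> verts G) \<and>
     bij_betw (rot G) (darts G) (darts G) \<and>
     (\<forall>d\<in>darts G. vx G (rot G d) = vx G d) \<and>
     (\<forall>d\<in>darts G. \<forall>d'\<in>darts G. vx G d = vx G d' \<longrightarrow> (\<exists>k. (rot G ^^ k) d = d')) \<and>
     (\<forall>d\<in>darts G. opp G d \<in> darts G \<and> opp G d \<noteq> d \<and> opp G (opp G d) = d)"

definition edges :: "('v, 'd) rgraph \<Rightarrow> 'd set set" where
  "edges G = (\<lambda>d. {d, opp G d}) ` darts G"

definition orbit_of :: "('d \<Rightarrow> 'd) \<Rightarrow> 'd \<Rightarrow> 'd set" where
  "orbit_of f d = {(f ^^ k) d | k. True}"

definition isolated_verts :: "('v, 'd) rgraph \<Rightarrow> 'v set" where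
  "isolated_verts G = {v \<in> verts G. \<forall>d\<in>darts G. vx G d \<noteq> v}"

text \<open>Face permutation; its orbits are the boundary components through darts.\<close>
definition facep :: "('v, 'd) rgraph \<Rightarrow> 'd \<Rightarrow> 'd" where
  "facep G = rot G \<circ> opp G"

definition faces :: "('v, 'd) rgraph \<Rightarrow> ('v + 'd set) set" where
  "faces G = Inl ` isolated_verts G \<union> Inr ` (orbit_of (facep G) ` darts G)"

definition nv :: "('v, 'd) rgraph \<Rightarrow> nat" where "nv G = card (verts G)"
definition ne :: "('v, 'd) rgraph \<Rightarrow> nat" where "ne G = card (edges G)"
definition nf :: "('v, 'd) rgraph \<Rightarrow> nat" where "nf G = card (faces G)"

definition dual :: "('v, 'd) rgraph \<Rightarrow> ('v + 'd set, 'd) rgraph" where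
  "dual G = \<lparr> verts = faces G, darts = darts G,
              vx = (\<lambda>d. Inr (orbit_of (facep G) d)),
              rot = facep G, opp = opp G \<rparr>"

definition first_return :: "('d \<Rightarrow> 'd) \<Rightarrow> 'd set \<Rightarrow> 'd \<Rightarrow> 'd" where
  "first_return f S d = (f ^^ (LEAST k. 0 < k \<and> (f ^^ k) d \<in> S)) d"

definition subrg :: "('v, 'd) rgraph \<Rightarrow> 'v set \<Rightarrow> 'd set set \<Rightarrow> ('v, 'd) rgraph" where
  "subrg G W B = \<lparr> verts = W, darts = \<Union>B, vx = vx G,
                   rot = first_return (rot G) (\<Union>B), opp = opp G \<rparr>"

definition restr :: "('v, 'd) rgraph \<Rightarrow> 'd set set \<Rightarrow> ('v, 'd) rgraph" where
  "restr G A = subrg G (verts G) A"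

definition blk :: "'v set set \<Rightarrow> 'v \<Rightarrow> 'v set" where
  "blk P u = (THE X. X \<in> P \<and> u \<in> X)"

definition padj :: "('v, 'd) rgraph \<Rightarrow> 'v set set \<Rightarrow> ('v set \<times> 'v set) set" where
  "padj H P = {(blk P (vx H d), blk P (vx H (opp H d))) | d. d \<in> darts H}"

text \<open>Connected components of \<open>G(H;P)\<close>, each given as its set of vertices (blocks).\<close>
definition pcomps :: "('v, 'd) rgraph \<Rightarrow> 'v set set \<Rightarrow> 'v set set set" where
  "pcomps H P = (\<lambda>X. {Y \<in> P. (X, Y) \<in> (padj H P)\<^sup>*}) ` P"

definition comp_edges :: "('v, 'd) rgraph \<Rightarrow> 'v set set \<Rightarrow> 'v set set \<Rightarrow> 'd set set" where
  "comp_edges H P C = {e \<in> edges H. \<exists>d\<in>e. blk P (vx H d) \<in> C}"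

definition comp_rg :: "('v, 'd) rgraph \<Rightarrow> 'v set set \<Rightarrow> 'v set set \<Rightarrow> ('v, 'd) rgraph" where
  "comp_rg H P C = subrg H (\<Union>C) (comp_edges H P C)"

definition pnullity :: "('v, 'd) rgraph \<Rightarrow> 'v set set \<Rightarrow> nat" where
  "pnullity H P = ne H + card (pcomps H P) - card P"

text \<open>Twice the genus \<open>g(H,K) = (2k(K)+e(K)-v(K)+\<omega>(K)-f(H[K]))/2\<close> of a component \<open>K\<close>
(for which \<open>k(K) = 1\<close>), as an integer; the variables \<open>x_g, y_g\<close> are indexed by \<open>2g\<close>.\<close>
definition gen2 :: "('v, 'd) rgraph \<Rightarrow> 'v set set \<Rightarrow> ('v set \<Rightarrow> nat) \<Rightarrow> 'v set set \<Rightarrow> int" where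
  "gen2 H P w C = 2 + int (card (comp_edges H P C)) - int (card C) + int (\<Sum>X\<in>C. w X)
                    - int (nf (comp_rg H P C))"

definition packaged :: "('v, 'd) rgraph \<Rightarrow> 'v set set \<Rightarrow> ('v + 'd set) set set \<Rightarrow> bool" where
  "packaged G VV FF \<longleftrightarrow> wf_rgraph G \<and> partition_on (verts G) VV \<and> partition_on (faces G) FF"

text \<open>\<open>x, y\<close> are the variables \<open>x, y\<close>; \<open>xg j\<close>, \<open>yg j\<close> stand for \<open>x_{j/2}\<close>, \<open>y_{j/2}\<close>.\<close>
definition tutte :: "('v, 'd) rgraph \<Rightarrow> 'v set set \<Rightarrow> ('v set \<Rightarrow> nat)
     \<Rightarrow> ('v + 'd set) set set \<Rightarrow> (('v + 'd set) set \<Rightarrow> nat)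
     \<Rightarrow> real \<Rightarrow> (int \<Rightarrow> real) \<Rightarrow> real \<Rightarrow> (int \<Rightarrow> real) \<Rightarrow> real" where
  "tutte G VV wV FF wF x xg y yg =
     (\<Sum>A\<in>Pow (edges G).
        x ^ pnullity (restr (dual G) (edges G - A)) FF *
        y ^ pnullity (restr G A) VV *
        (\<Prod>H\<in>pcomps (restr (dual G) (edges G - A)) FF.
            xg (gen2 (restr (dual G) (edges G - A)) FF wF H)) *
        (\<Prod>K\<in>pcomps (restr G A) VV. yg (gen2 (restr G A) VV wV K)))"

text \<open>\<open>q\<^sup>1_\<Gamma>(H,P,\<omega>)\<close>: product over components \<open>K\<close> of \<open>G(H;P)\<close> of the connected formula
applied to \<open>H[K]\<close>. \<open>N\<close> is \<open>|\<Gamma>|\<close>, \<open>ns\<close> the list of irreducible dimensions.\<close>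
definition qone :: "nat \<Rightarrow> nat list \<Rightarrow> ('v, 'd) rgraph \<Rightarrow> 'v set set \<Rightarrow> ('v set \<Rightarrow> nat) \<Rightarrow> real" where
  "qone N ns H P w =
     (\<Prod>K\<in>pcomps H P.
        real N powi (int (card (comp_edges H P K)) - int (card K)) *
        (\<Sum>n\<leftarrow>ns. real n powi (int (nf (comp_rg H P K)) - int (card (comp_edges H P K))
                                 + int (card K) - int (\<Sum>X\<in>K. w X))))"

definition qflow :: "nat \<Rightarrow> nat list \<Rightarrow> ('v, 'd) rgraph \<Rightarrow> 'v set set \<Rightarrow> ('v set \<Rightarrow> nat) \<Rightarrow> real" where
  "qflow N ns G VV wV = (\<Sum>A\<in>Pow (edges G). (-1) ^ card (edges G - A) * qone N ns (restr G A) VV wV)"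

text \<open>\<open>p\<^sup>1_\<Gamma>(\<HH>,P,\<omega>)\<close>, expressed through \<open>Hd = \<HH>\<^sup>*\<close> (whose vertices are the boundary
components of \<open>\<HH>\<close>, partitioned by \<open>P\<close>): product over components \<open>K\<close> of \<open>G(\<HH>\<^sup>*;P)\<close>;
note \<open>v((\<HH>\<^sup>*[K])\<^sup>*) = f(\<HH>\<^sup>*[K])\<close>.\<close>
definition pone_dual :: "nat \<Rightarrow> nat list \<Rightarrow> ('u, 'd) rgraph \<Rightarrow> 'u set set \<Rightarrow> ('u set \<Rightarrow> nat) \<Rightarrow> real" where
  "pone_dual N ns Hd P w =
     (\<Prod>K\<in>pcomps Hd P.
        real N powi (int (card (comp_edges Hd P K)) - int (card K)) *
        (\<Sum>n\<leftarrow>ns. real n powi (int (nf (comp_rg Hd P K)) - int (card (comp_edges Hd P K))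
                                 + int (card K) - int (\<Sum>X\<in>K. w X))))"

text \<open>Dual of the contraction \<open>G/B\<close>: \<open>(G/B)\<^sup>* = G\<^sup>* \<setminus> B\<close>, with the boundary components of \<open>G/B\<close>
identified with those of \<open>G\<close> (i.e. with the vertices of \<open>G\<^sup>*\<close>).\<close>
definition contract_dual :: "('v, 'd) rgraph \<Rightarrow> 'd set set \<Rightarrow> ('v + 'd set, 'd) rgraph" where
  "contract_dual G B = restr (dual G) (edges G - B)"

definition pflow :: "nat \<Rightarrow> nat list \<Rightarrow> ('v, 'd) rgraph \<Rightarrow> ('v + 'd set) set set
                      \<Rightarrow> (('v + 'd set) set \<Rightarrow> nat) \<Rightarrow> real" where
  "pflow N ns G FF wF = (\<Sum>A\<in>Pow (edges G).
      (-1) ^ card (edges G - A) * pone_dual N ns (contract_dual G (edges G - A)) FF wF)"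

definition is_rep :: "('g, 'b) monoid_scheme \<Rightarrow> nat \<Rightarrow> ('g \<Rightarrow> complex mat) \<Rightarrow> bool" where
  "is_rep \<Gamma> n \<rho> \<longleftrightarrow> (\<forall>g\<in>carrier \<Gamma>. \<rho> g \<in> carrier_mat n n) \<and>
     (\<forall>g\<in>carrier \<Gamma>. \<forall>h\<in>carrier \<Gamma>. \<rho> (g \<otimes>\<^bsub>\<Gamma>\<^esub> h) = \<rho> g * \<rho> h) \<and>
     \<rho> \<one>\<^bsub>\<Gamma>\<^esub> = 1\<^sub>m n"

definition invariant_subspace :: "('g, 'b) monoid_scheme \<Rightarrow> nat \<Rightarrow> ('g \<Rightarrow> complex mat) \<Rightarrow> complex vec set \<Rightarrow> bool" where
  "invariant_subspace \<Gamma> n \<rho> W \<longleftrightarrow> W \<subseteq> carrier_vec n \<and> 0\<^sub>v n \<in> W \<and>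
     (\<forall>v\<in>W. \<forall>u\<in>W. v + u \<in> W) \<and> (\<forall>c. \<forall>v\<in>W. c \<cdot>\<^sub>v v \<in> W) \<and>
     (\<forall>g\<in>carrier \<Gamma>. \<forall>v\<in>W. \<rho> g *\<^sub>v v \<in> W)"

definition irred_rep :: "('g, 'b) monoid_scheme \<Rightarrow> nat \<Rightarrow> ('g \<Rightarrow> complex mat) \<Rightarrow> bool" where
  "irred_rep \<Gamma> n \<rho> \<longleftrightarrow> is_rep \<Gamma> n \<rho> \<and> 0 < n \<and>
     (\<forall>W. invariant_subspace \<Gamma> n \<rho> W \<longrightarrow> W = {0\<^sub>v n} \<or> W = carrier_vec n)"

definition equiv_rep :: "('g, 'b) monoid_scheme \<Rightarrow> nat \<Rightarrow> ('g \<Rightarrow> complex mat) \<Rightarrow> nat \<Rightarrow> ('g \<Rightarrow> complex mat) \<Rightarrow> bool" where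
  "equiv_rep \<Gamma> n \<rho> m \<sigma> \<longleftrightarrow> n = m \<and>
     (\<exists>P\<in>carrier_mat n n. \<exists>Q\<in>carrier_mat n n. P * Q = 1\<^sub>m n \<and> Q * P = 1\<^sub>m n \<and>
        (\<forall>g\<in>carrier \<Gamma>. P * \<rho> g = \<sigma> g * P))"

definition irrep_dims :: "('g, 'b) monoid_scheme \<Rightarrow> nat list \<Rightarrow> bool" where
  "irrep_dims \<Gamma> ns \<longleftrightarrow> (\<exists>\<rho>s.
     (\<forall>i<length ns. irred_rep \<Gamma> (ns ! i) (\<rho>s i)) \<and>
     (\<forall>i<length ns. \<forall>j<length ns. i \<noteq> j \<longrightarrow> \<not> equiv_rep \<Gamma> (ns ! i) (\<rho>s i) (ns ! j) (\<rho>s j)) \<and>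
     (\<forall>n \<rho>. irred_rep \<Gamma> n \<rho> \<longrightarrow> (\<exists>i<length ns. equiv_rep \<Gamma> n \<rho> (ns ! i) (\<rho>s i))))"

end

theory Submission
  imports Defs
begin

(* Fix a spanning subgraph A. The components K of G(G|A; V) together use all |A| edges
   and all |V| blocks, and a graph has at least as many components as vertices minus
   edges, so the nullity is exactly n = |A| + k - |V|. Hence
   |Gamma|^(|A| - |V|) = (-1)^(|A| - |V|) (-|Gamma|)^n (-1/|Gamma|)^k, while the remaining
   factor sum_i n_i^(f - e(K) + v(K) - w(K)) of each component is sum_i n_i^(2 - 2g(K)).
   So the summands of q_Gamma and of the specialised Tutte polynomial agree up to the sign
   (-1)^(e - |V|). The tension count is the flow count of the dual, because
   (G/A^c)^* = G^*|A, and reindexing the Tutte sum by complements gives part (2).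
   About Gamma only |Gamma| > 0 is used: the identities hold for any list of dimensions. *)

section \<open>Components of a symmetric relation\<close>

lemma equiv_Restr_rtrancl:
  assumes "sym R"
  shows "equiv P (Restr (R\<^sup>*) P)"
  using sym_rtrancl[OF assms]
  by (auto simp: equiv_def refl_on_def sym_def trans_def intro: rtrancl_trans)

lemma rtrancl_insert_sym_pair:
  assumes "sym R" "(x, z) \<in> (insert (a, b) (insert (b, a) R))\<^sup>*"
  shows "(x, z) \<in> R\<^sup>* \<or>
    ((x, a) \<in> R\<^sup>* \<or> (x, b) \<in> R\<^sup>*) \<and> ((z, a) \<in> R\<^sup>* \<or> (z, b) \<in> R\<^sup>*)"
  using assms(2) sym_rtrancl[OF assms(1)]
  by (auto simp: rtrancl_insert dest: symD)

lemma card_quotient_le_insert_sym_pair: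
  assumes "finite P" "sym R" "a \<in> P" "b \<in> P"
  defines "R' \<equiv> insert (a, b) (insert (b, a) R)"
  shows "card (P // Restr (R\<^sup>*) P) \<le> card (P // Restr (R'\<^sup>*) P) + 1"
proof -
  let ?r = "Restr (R\<^sup>*) P" and ?r' = "Restr (R'\<^sup>*) P"
  have eq: "equiv P ?r" by (rule equiv_Restr_rtrancl[OF assms(2)])
  have "sym R'" using assms(2) by (auto simp: R'_def sym_def)
  then have eq': "equiv P ?r'" by (rule equiv_Restr_rtrancl)
  have "R\<^sup>* \<subseteq> R'\<^sup>*" by (rule rtrancl_mono) (auto simp: R'_def)
  have class_image: "?r' `` (?r `` {x}) = ?r' `` {x}" if "x \<in> P" for x
    using that \<open>R\<^sup>* \<subseteq> R'\<^sup>*\<close> equiv_class_self[OF eq] eq'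
    by (auto elim: equivE dest: transD)
  define Cb where "Cb = ?r `` {b}"
  \<comment> \<open>The new edge can only merge the class of \<open>b\<close> into that of \<open>a\<close>.\<close>
  have inj: "inj_on (\<lambda>C. ?r' `` C) (P // ?r - {Cb})"
  proof (rule inj_onI)
    fix C C' assume C: "C \<in> P // ?r - {Cb}" and C': "C' \<in> P // ?r - {Cb}"
      and img: "?r' `` C = ?r' `` C'"
    obtain x y where xy: "x \<in> P" "y \<in> P" "C = ?r `` {x}" "C' = ?r `` {y}"
      using C C' by (auto elim!: quotientE)
    have "?r' `` {x} = ?r' `` {y}" using img xy class_image by simp
    then have "(x, y) \<in> R'\<^sup>*" using eq_equiv_class[OF _ eq' xy(2)] by auto
    then have "(x, y) \<in> R\<^sup>* \<or>
      ((x, a) \<in> R\<^sup>* \<or> (x, b) \<in> R\<^sup>*) \<and> ((y, a) \<in> R\<^sup>* \<or> (y, b) \<in> R\<^sup>*)"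
      unfolding R'_def by (rule rtrancl_insert_sym_pair[OF assms(2)])
    moreover have "(x, b) \<notin> R\<^sup>*" "(y, b) \<notin> R\<^sup>*"
      using C C' xy assms(4) equiv_class_eq_iff[OF eq] by (auto simp: Cb_def)
    ultimately have "(x, y) \<in> R\<^sup>*"
      using sym_rtrancl[OF assms(2)] by (auto dest: symD intro: rtrancl_trans)
    then show "C = C'" using xy equiv_class_eq[OF eq] by simp
  qed
  have fin: "finite (P // ?r)" using assms(1) by (intro finite_quotient) auto
  have "card (P // ?r) \<le> card (P // ?r - {Cb}) + 1"
    using card_Suc_Diff1[OF fin, of Cb] by (cases "Cb \<in> P // ?r") auto
  also have "card (P // ?r - {Cb}) = card ((\<lambda>C. ?r' `` C) ` (P // ?r - {Cb}))"
    using inj by (simp add: card_image)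
  also have "\<dots> \<le> card (P // ?r')"
  proof (rule card_mono)
    show "finite (P // ?r')" using assms(1) by (intro finite_quotient) auto
    show "(\<lambda>C. ?r' `` C) ` (P // ?r - {Cb}) \<subseteq> P // ?r'"
      using class_image by (auto elim!: quotientE intro: quotientI)
  qed
  finally show ?thesis by simp
qed

lemma card_le_card_plus_card_quotient_rtrancl:
  assumes "finite P" "finite S" "S \<subseteq> P \<times> P"
  shows "card P \<le> card S + card (P // Restr ((S \<union> S\<inverse>)\<^sup>*) P)"
  using assms(2,3)
proof (induction S rule: finite_induct)
  case empty
  have "P // Restr (({} \<union> {}\<inverse>)\<^sup>*) P = (\<lambda>x. {x}) ` P"
    by (auto simp: quotient_def)
  then show ?case by (simp add: card_image)
next
  case (insert p S)
  obtain a b where p: "p = (a, b)" by (cases p)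
  have ab: "a \<in> P" "b \<in> P" using insert.prems p by auto
  have "insert p S \<union> (insert p S)\<inverse> = insert (a, b) (insert (b, a) (S \<union> S\<inverse>))"
    using p by auto
  then show ?case
    using insert card_quotient_le_insert_sym_pair[OF assms(1) sym_Un_converse ab, of S] by simp
qed

lemma power_int_sum:
  fixes x :: "'a :: field"
  assumes "x \<noteq> 0"
  shows "(\<Prod>i\<in>I. x powi f i) = x powi (\<Sum>i\<in>I. f i)"
proof (induction I rule: infinite_finite_induct)
  case (insert i I)
  then show ?case using assms by (simp add: power_int_add)
qed simp_all

section \<open>Graphs of blocks\<close>

lemma blk_in_partition:
  assumes "partition_on A P" "u \<in> A"
  shows "blk P u \<in> P"
proof -
  have "\<exists>!X. X \<in> P \<and> u \<in> X"
    using assms partition_onD1[OF assms(1)] partition_onD2[OF assms(1)]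
    by (auto simp: disjoint_def)
  then show ?thesis unfolding blk_def by (rule the1I2) simp
qed

text \<open>Unlike \<^const>\<open>wf_rgraph\<close>, this weak well-formedness survives \<^const>\<open>restr\<close>
  and holds for the dual.\<close>
definition dart_graph :: "('v, 'd) rgraph \<Rightarrow> bool" where
  "dart_graph H \<longleftrightarrow> finite (verts H) \<and> finite (darts H) \<and>
     (\<forall>d\<in>darts H. vx H d \<in> verts H \<and> opp H d \<in> darts H \<and> opp H (opp H d) = d)"

lemma dart_graph_if_wf_rgraph: "wf_rgraph G \<Longrightarrow> dart_graph G"
  unfolding wf_rgraph_def dart_graph_def by auto

lemma dart_graph_dual:
  assumes "wf_rgraph G"
  shows "dart_graph (dual G)"
proof -
  have "finite (faces G)"
    using assms unfolding wf_rgraph_def faces_def isolated_verts_def by auto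
  then show ?thesis
    using assms unfolding wf_rgraph_def dart_graph_def dual_def faces_def by auto
qed

lemma edges_dual [simp]: "edges (dual G) = edges G"
  unfolding edges_def dual_def by simp

lemma verts_restr [simp]: "verts (restr H B) = verts H"
  unfolding restr_def subrg_def by simp

lemma finite_edges: "dart_graph H \<Longrightarrow> finite (edges H)"
  unfolding dart_graph_def edges_def by simp

lemma edge_eq_opp_pair:
  assumes "dart_graph H" "e \<in> edges H" "d \<in> e"
  shows "d \<in> darts H" "e = {d, opp H d}"
  using assms unfolding dart_graph_def edges_def by auto

lemma dart_graph_restr:
  assumes "dart_graph H" "B \<subseteq> edges H"
  shows "dart_graph (restr H B)"
proof -
  have "\<Union>B \<subseteq> darts H" using edge_eq_opp_pair(1)[OF assms(1)] assms(2) by blast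
  moreover have "opp H d \<in> \<Union>B" if "d \<in> \<Union>B" for d
    using edge_eq_opp_pair(2)[OF assms(1)] assms(2) that by blast
  ultimately show ?thesis
    using assms(1) rev_finite_subset unfolding dart_graph_def restr_def subrg_def by auto
qed

lemma edges_restr:
  assumes "dart_graph H" "B \<subseteq> edges H"
  shows "edges (restr H B) = B"
proof -
  have pair: "{d, opp H d} = b" if "b \<in> B" "d \<in> b" for b d
    using edge_eq_opp_pair(2)[OF assms(1) _ that(2)] that assms(2) by auto
  have "\<exists>d. d \<in> b" if "b \<in> B" for b
    using that assms(2) unfolding edges_def by auto
  then have "(\<lambda>d. {d, opp H d}) ` \<Union>B = B"
    using pair by (auto simp: image_iff)
  then show ?thesis unfolding edges_def restr_def subrg_def by simp
qed

lemma padj_eq_image: "padj H P = (\<lambda>d. (blk P (vx H d), blk P (vx H (opp H d)))) ` darts H"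
  unfolding padj_def by auto

lemma padj_subset:
  assumes "dart_graph H" "partition_on (verts H) P"
  shows "padj H P \<subseteq> P \<times> P"
  using assms(1) blk_in_partition[OF assms(2)] unfolding padj_eq_image dart_graph_def by auto

lemma sym_padj:
  assumes "dart_graph H"
  shows "sym (padj H P)"
proof (rule symI)
  fix X Y assume "(X, Y) \<in> padj H P"
  then obtain d where "d \<in> darts H" "X = blk P (vx H d)" "Y = blk P (vx H (opp H d))"
    unfolding padj_def by blast
  moreover have "opp H d \<in> darts H" "opp H (opp H d) = d"
    using assms \<open>d \<in> darts H\<close> unfolding dart_graph_def by auto
  ultimately show "(Y, X) \<in> padj H P" unfolding padj_def by force
qed

lemma pcomps_eq_quotient: "pcomps H P = P // Restr ((padj H P)\<^sup>*) P"
  unfolding pcomps_def quotient_def by auto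

lemma equiv_Restr_padj: "dart_graph H \<Longrightarrow> equiv P (Restr ((padj H P)\<^sup>*) P)"
  by (rule equiv_Restr_rtrancl[OF sym_padj])

lemma finite_pcomps:
  assumes "dart_graph H" "partition_on (verts H) P"
  shows "finite P" "finite (pcomps H P)"
  using assms finite_elements unfolding dart_graph_def pcomps_def by auto

lemma sum_card_pcomps:
  assumes "dart_graph H" "partition_on (verts H) P"
  shows "(\<Sum>K\<in>pcomps H P. card K) = card P"
proof -
  have "partition_on P (pcomps H P)"
    unfolding pcomps_eq_quotient by (rule partition_on_quotient[OF equiv_Restr_padj[OF assms(1)]])
  moreover have "finite K" if "K \<in> pcomps H P" for K
    using that finite_pcomps(1)[OF assms] unfolding pcomps_def by auto
  ultimately show ?thesis by (simp add: product_partition)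
qed

lemma edge_ends_connected:
  assumes "dart_graph H" "partition_on (verts H) P" "e \<in> edges H" "x \<in> e" "y \<in> e"
  shows "(blk P (vx H x), blk P (vx H y)) \<in> Restr ((padj H P)\<^sup>*) P"
proof -
  obtain d where d: "d \<in> darts H" "e = {d, opp H d}" using assms(3) unfolding edges_def by blast
  have "(blk P (vx H d), blk P (vx H (opp H d))) \<in> padj H P"
    using d(1) unfolding padj_def by blast
  then have "(blk P (vx H x), blk P (vx H y)) \<in> (padj H P)\<^sup>*"
    using assms(4,5) d(2) sym_padj[OF assms(1)] by (auto dest: symD)
  moreover have "x \<in> darts H" "y \<in> darts H"
    using edge_eq_opp_pair(1)[OF assms(1,3)] assms(4,5) by auto
  ultimately show ?thesis
    using assms(1) blk_in_partition[OF assms(2)] unfolding dart_graph_def by auto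
qed

lemma sum_card_comp_edges:
  assumes "dart_graph H" "partition_on (verts H) P"
  shows "(\<Sum>K\<in>pcomps H P. card (comp_edges H P K)) = ne H"
proof -
  have eqv: "equiv P (Restr ((padj H P)\<^sup>*) P)" by (rule equiv_Restr_padj[OF assms(1)])
  have disj: "comp_edges H P K \<inter> comp_edges H P K' = {}"
    if "K \<in> pcomps H P" "K' \<in> pcomps H P" "K \<noteq> K'" for K K'
  proof (rule ccontr)
    assume "comp_edges H P K \<inter> comp_edges H P K' \<noteq> {}"
    then obtain e x y where "e \<in> edges H" "x \<in> e" "y \<in> e"
        "blk P (vx H x) \<in> K" "blk P (vx H y) \<in> K'"
      unfolding comp_edges_def by blast
    then have "K = K'"
      using quotient_eq_iff[OF eqv] that(1,2) edge_ends_connected[OF assms]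
      unfolding pcomps_eq_quotient by blast
    with that(3) show False ..
  qed
  have cover: "\<Union>(comp_edges H P ` pcomps H P) = edges H"
  proof (intro equalityI subsetI)
    fix e assume e: "e \<in> edges H"
    then obtain d where d: "d \<in> e" "d \<in> darts H" unfolding edges_def by blast
    then have "vx H d \<in> verts H" using assms(1) unfolding dart_graph_def by blast
    then have "blk P (vx H d) \<in> P" by (rule blk_in_partition[OF assms(2)])
    then have "blk P (vx H d) \<in> \<Union>(pcomps H P)"
      using Union_quotient[OF eqv] unfolding pcomps_eq_quotient by blast
    then show "e \<in> \<Union>(comp_edges H P ` pcomps H P)"
      using e d unfolding comp_edges_def by blast
  qed (auto simp: comp_edges_def)
  have "(\<Sum>K\<in>pcomps H P. card (comp_edges H P K)) = card (\<Union>(comp_edges H P ` pcomps H P))"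
    using disj finite_pcomps(2)[OF assms] finite_edges[OF assms(1)]
    by (intro card_UN_disjoint[symmetric]) (auto simp: comp_edges_def)
  then show ?thesis unfolding cover ne_def .
qed

lemma padj_orientation:
  assumes "dart_graph H"
  obtains S where "padj H P = S \<union> S\<inverse>" "finite S" "card S \<le> ne H"
proof -
  define ends where "ends d = (blk P (vx H d), blk P (vx H (opp H d)))" for d
  have "\<forall>e\<in>edges H. \<exists>d. d \<in> darts H \<and> e = {d, opp H d}" unfolding edges_def by blast
  then obtain c where c: "\<And>e. e \<in> edges H \<Longrightarrow> c e \<in> darts H \<and> e = {c e, opp H (c e)}"
    by metis
  define S where "S = ends ` c ` edges H"
  have opp_ends: "ends (opp H d) = prod.swap (ends d)" if "d \<in> darts H" for d
    using assms that unfolding dart_graph_def ends_def by simp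
  have "padj H P = S \<union> S\<inverse>"
  proof (intro equalityI subsetI)
    fix p assume "p \<in> padj H P"
    then obtain d where d: "d \<in> darts H" "p = ends d" unfolding padj_eq_image ends_def by blast
    have e: "{d, opp H d} \<in> edges H" using d(1) unfolding edges_def by blast
    then have "c {d, opp H d} = d \<or> c {d, opp H d} = opp H d" using c by blast
    then show "p \<in> S \<union> S\<inverse>"
      using e d opp_ends[OF d(1)] unfolding S_def
      by (metis UnI1 UnI2 converseI image_eqI prod.collapse swap_simp)
  next
    fix p assume "p \<in> S \<union> S\<inverse>"
    then obtain e where e: "e \<in> edges H" "p = ends (c e) \<or> p = prod.swap (ends (c e))"
      unfolding S_def by auto (metis swap_simp)
    have "opp H (c e) \<in> darts H" using assms c[OF e(1)] unfolding dart_graph_def by blast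
    then show "p \<in> padj H P"
      using e c[OF e(1)] opp_ends[of "c e", symmetric] unfolding padj_eq_image ends_def[symmetric]
      by auto
  qed
  moreover have "finite S" "card S \<le> ne H"
    using finite_edges[OF assms] unfolding S_def ne_def
    by (auto intro: order_trans[OF card_image_le card_image_le])
  ultimately show ?thesis by (rule that)
qed

lemma card_partition_le_ne_plus_card_pcomps:
  assumes "dart_graph H" "partition_on (verts H) P"
  shows "card P \<le> ne H + card (pcomps H P)"
proof -
  obtain S where S: "padj H P = S \<union> S\<inverse>" "finite S" "card S \<le> ne H"
    using padj_orientation[OF assms(1)] .
  then have "S \<subseteq> P \<times> P" using padj_subset[OF assms] by blast
  then show ?thesis
    using S card_le_card_plus_card_quotient_rtrancl[OF finite_pcomps(1)[OF assms] S(2)]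
    unfolding pcomps_eq_quotient by fastforce
qed

lemma int_pnullity:
  assumes "dart_graph H" "partition_on (verts H) P"
  shows "int (pnullity H P) = int (ne H) + int (card (pcomps H P)) - int (card P)"
  using card_partition_le_ne_plus_card_pcomps[OF assms] unfolding pnullity_def by simp

section \<open>Specialising the Tutte polynomial\<close>

definition genus_weight :: "nat \<Rightarrow> nat list \<Rightarrow> int \<Rightarrow> real" where
  "genus_weight N ns = (\<lambda>j. - (1 / real N) * (\<Sum>n\<leftarrow>ns. real n powi (2 - j)))"

definition tutte_factor ::
    "('u, 'd) rgraph \<Rightarrow> 'u set set \<Rightarrow> ('u set \<Rightarrow> nat) \<Rightarrow> real \<Rightarrow> (int \<Rightarrow> real) \<Rightarrow> real" where
  "tutte_factor H P w y yg = y ^ pnullity H P * (\<Prod>K\<in>pcomps H P. yg (gen2 H P w K))"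

definition tutte_factor_sum ::
    "('u, 'd) rgraph \<Rightarrow> 'u set set \<Rightarrow> ('u set \<Rightarrow> nat) \<Rightarrow> real \<Rightarrow> (int \<Rightarrow> real) \<Rightarrow> real" where
  "tutte_factor_sum X P w y yg = (\<Sum>A\<in>Pow (edges X). tutte_factor (restr X A) P w y yg)"

lemma tutte_eq_sum_tutte_factor:
  "tutte G VV wV FF wF x xg y yg =
     (\<Sum>A\<in>Pow (edges G). tutte_factor (restr (dual G) (edges G - A)) FF wF x xg *
                         tutte_factor (restr G A) VV wV y yg)"
  unfolding tutte_def tutte_factor_def by (simp add: mult_ac)

lemma tutte_factor_one [simp]: "tutte_factor H P w 1 (\<lambda>_. 1) = 1"
  unfolding tutte_factor_def by simp

lemma tutte_at_x_one: "tutte G VV wV FF wF 1 (\<lambda>_. 1) y yg = tutte_factor_sum G VV wV y yg"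
  unfolding tutte_eq_sum_tutte_factor tutte_factor_sum_def by simp

lemma tutte_at_y_one:
  assumes "finite (edges G)"
  shows "tutte G VV wV FF wF x xg 1 (\<lambda>_. 1) = tutte_factor_sum (dual G) FF wF x xg"
  unfolding tutte_eq_sum_tutte_factor tutte_factor_sum_def edges_dual
  using assms by (intro sum.reindex_bij_witness[where i = "\<lambda>A. edges G - A" and j = "\<lambda>A. edges G - A"])
    auto

lemma pflow_eq_qflow_dual: "pflow N ns G FF wF = qflow N ns (dual G) FF wF"
  unfolding pflow_def qflow_def edges_dual
proof (rule sum.cong[OF refl])
  fix A assume "A \<in> Pow (edges G)"
  then have "contract_dual G (edges G - A) = restr (dual G) A"
    unfolding contract_dual_def by (simp add: double_diff)
  then show "(-1) ^ card (edges G - A) * pone_dual N ns (contract_dual G (edges G - A)) FF wF =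
      (-1) ^ card (edges G - A) * qone N ns (restr (dual G) A) FF wF"
    unfolding pone_dual_def qone_def by simp
qed

lemma qone_eq_tutte_factor:
  assumes "dart_graph H" "partition_on (verts H) P" "N > 0"
  shows "qone N ns H P w =
    (-1) powi (int (ne H) - int (card P)) * tutte_factor H P w (- real N) (genus_weight N ns)"
proof -
  define a where "a K = (\<Sum>n\<leftarrow>ns. real n powi (2 - gen2 H P w K))" for K
  define m where "m = int (ne H) - int (card P)"
  define k where "k = card (pcomps H P)"
  have "(\<Prod>K\<in>pcomps H P. real N powi (int (card (comp_edges H P K)) - int (card K)))
      = real N powi (\<Sum>K\<in>pcomps H P. int (card (comp_edges H P K)) - int (card K))"
    using assms(3) by (simp add: power_int_sum)
  also have "\<dots> = real N powi m"
    using sum_card_comp_edges[OF assms(1,2)] sum_card_pcomps[OF assms(1,2)]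
    unfolding m_def by (simp add: sum_subtractf flip: of_nat_sum)
  finally have q: "qone N ns H P w = real N powi m * (\<Prod>K\<in>pcomps H P. a K)"
    unfolding qone_def a_def gen2_def by (simp add: prod.distrib algebra_simps)
  have "int (pnullity H P) = m + int k"
    using int_pnullity[OF assms(1,2)] unfolding m_def k_def by simp
  then have "(- real N) ^ pnullity H P = (- real N) powi (m + int k)"
    by (metis power_int_of_nat)
  also have "\<dots> = (- real N) powi m * (- real N) ^ k"
    using assms(3) by (simp add: power_int_add)
  finally have pn: "(- real N) ^ pnullity H P = (- real N) powi m * (- real N) ^ k" .
  have cancel: "(- real N) ^ k * (- (1 / real N)) ^ k = 1"
    using assms(3) by (simp flip: power_mult_distrib)
  have "tutte_factor H P w (- real N) (genus_weight N ns)
      = (- real N) ^ pnullity H P * ((- (1 / real N)) ^ k * (\<Prod>K\<in>pcomps H P. a K))"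
    unfolding tutte_factor_def genus_weight_def a_def k_def by (simp only: prod.distrib prod_constant)
  also have "\<dots> = (- real N) powi m * ((- real N) ^ k * (- (1 / real N)) ^ k) * (\<Prod>K\<in>pcomps H P. a K)"
    unfolding pn by (simp only: mult_ac)
  also have "\<dots> = (- real N) powi m * (\<Prod>K\<in>pcomps H P. a K)"
    unfolding cancel by simp
  finally have t: "tutte_factor H P w (- real N) (genus_weight N ns)
      = (- real N) powi m * (\<Prod>K\<in>pcomps H P. a K)" .
  have "(-1) powi m * (- real N) powi m = real N powi m"
    by (simp flip: power_int_mult_distrib)
  then show ?thesis unfolding q t m_def[symmetric] by simp
qed

lemma qflow_eq_tutte_factor_sum:
  assumes "dart_graph X" "partition_on (verts X) P" "N > 0"
  shows "qflow N ns X P w = (-1) powi (int (ne X) - int (card P)) *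
    tutte_factor_sum X P w (- real N) (genus_weight N ns)"
  unfolding qflow_def tutte_factor_sum_def sum_distrib_left
proof (rule sum.cong[OF refl])
  fix A assume A: "A \<in> Pow (edges X)"
  moreover have "finite (edges X)" by (rule finite_edges[OF assms(1)])
  ultimately have "card (edges X - A) = ne X - card A" "card A \<le> ne X"
    unfolding ne_def by (auto simp: card_Diff_subset card_mono finite_subset)
  then have "(-1) ^ card (edges X - A) * (-1) powi (int (card A) - int (card P))
      = ((-1 :: real) powi (int (ne X) - int (card P)))"
    by (simp flip: power_int_of_nat power_int_add)
  moreover have "ne (restr X A) = card A"
    using edges_restr[OF assms(1)] A unfolding ne_def by simp
  ultimately show "(-1) ^ card (edges X - A) * qone N ns (restr X A) P w =
    (-1) powi (int (ne X) - int (card P)) *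
    tutte_factor (restr X A) P w (- real N) (genus_weight N ns)"
    using qone_eq_tutte_factor[OF dart_graph_restr[OF assms(1)] _ assms(3)] A assms(2)
    by (simp add: mult.assoc[symmetric])
qed

theorem theorem5p5:
  fixes G :: "('v, 'd) rgraph"
    and VV :: "'v set set" and wV :: "'v set \<Rightarrow> nat"
    and FF :: "('v + 'd set) set set" and wF :: "('v + 'd set) set \<Rightarrow> nat"
    and \<Gamma> :: "('g, 'b) monoid_scheme" and ns :: "nat list"
  assumes "packaged G VV FF"
    and "group \<Gamma>" and "finite (carrier \<Gamma>)"
    and "irrep_dims \<Gamma> ns"
  shows "(qflow (card (carrier \<Gamma>)) ns G VV wV =
           (-1) powi (int (ne G) - int (card VV)) *
           tutte G VV wV FF wF 1 (\<lambda>_. 1) (- real (card (carrier \<Gamma>)))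
             (\<lambda>j. - (1 / real (card (carrier \<Gamma>))) * (\<Sum>n\<leftarrow>ns. real n powi (2 - j))))
         \<and> (pflow (card (carrier \<Gamma>)) ns G FF wF =
           (-1) powi (int (ne G) - int (card FF)) *
           tutte G VV wV FF wF (- real (card (carrier \<Gamma>)))
             (\<lambda>j. - (1 / real (card (carrier \<Gamma>))) * (\<Sum>n\<leftarrow>ns. real n powi (2 - j))) 1 (\<lambda>_. 1))"
proof -
  have wf: "wf_rgraph G" and VV: "partition_on (verts G) VV" and FF: "partition_on (verts (dual G)) FF"
    using assms(1) unfolding packaged_def dual_def by auto
  have "card (carrier \<Gamma>) > 0"
    using assms(2,3) monoid.one_closed[OF group.is_monoid] card_gt_0_iff by blast
  then show ?thesis
    using qflow_eq_tutte_factor_sum[OF dart_graph_if_wf_rgraph[OF wf] VV]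
      qflow_eq_tutte_factor_sum[OF dart_graph_dual[OF wf] FF]
      finite_edges[OF dart_graph_if_wf_rgraph[OF wf]]
    by (simp add: tutte_at_x_one tutte_at_y_one pflow_eq_qflow_dual ne_def genus_weight_def)
qed

end
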